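(* Let $s\in[-\infty,0]$, let $\rho$ be a $2\times2$ density matrix and $X,Y$ be $2\times2$ Hermitian matrices. Define $\mathcal{I}_\rho^s(X,Y)=I^s(\rho,X)I^s(\rho,Y)-\frac1{16}\left[I^s(\rho,X+Y)-I^s(\rho,X-Y)\right]^2.$ Then $0\le\mathcal{I}_\rho^s(X,Y)\le\frac14\left|\mathrm{Tr}\big[\rho[X,Y]\big]\right|^2$.
   Context: Write $\rho=\sum_{i=1}^2\lambda_i|\psi_i\rangle\langle\psi_i|$ (orthonormal eigenbasis, $\lambda_1\ge\lambda_2\ge0$). For $-\infty<s<0$ and $a_1,a_2>0$ let $m_s(a_1,a_2)=\left(\frac{a_1^s+a_2^s}{2}\right)^{1/s}$; $m_0(a_1,a_2)=\sqrt{a_1a_2}$; $m_{-\infty}(a_1,a_2)=\min\{a_1,a_2\}$; and $m_s(a,0)=m_s(0,a)=m_s(0,0)=0$. Define $\zeta_\rho^s(X,Y)=\mathrm{Tr}[\rho X^\dagger Y]-\sum_{i,j} m_s(\lambda_i,\lambda_j)\langle\psi_i|X^\dagger|\psi_j\rangle\langle\psi_j|Y|\psi_i\rangle$ and $I^s(\rho,X)=\zeta_\rho^s(X,X)$. $[X,Y]=XY-YX$. *)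

theory Defs
  imports "HOL-Analysis.Analysis"
begin

type_synonym cmat2 = "complex^2^2"
type_synonym cvec2 = "complex^2"

definition cadj :: "cmat2 \<Rightarrow> cmat2" where
  "cadj A = (\<chi> i j. cnj (A $ j $ i))"

definition mtrace :: "cmat2 \<Rightarrow> complex" where
  "mtrace A = (\<Sum>i\<in>UNIV. A $ i $ i)"

definition braket :: "cvec2 \<Rightarrow> cvec2 \<Rightarrow> complex" where
  "braket u v = (\<Sum>i\<in>UNIV. cnj (u $ i) * v $ i)"

definition hermitian :: "cmat2 \<Rightarrow> bool" where
  "hermitian A \<longleftrightarrow> cadj A = A"

definition psd :: "cmat2 \<Rightarrow> bool" where
  "psd A \<longleftrightarrow> hermitian A \<and> (\<forall>v. 0 \<le> Re (braket v (A *v v)))"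

definition density_matrix :: "cmat2 \<Rightarrow> bool" where
  "density_matrix \<rho> \<longleftrightarrow> psd \<rho> \<and> mtrace \<rho> = 1"

definition commutator :: "cmat2 \<Rightarrow> cmat2 \<Rightarrow> cmat2" where
  "commutator X Y = X ** Y - Y ** X"

definition eig_decomp :: "cmat2 \<Rightarrow> real \<Rightarrow> real \<Rightarrow> cvec2 \<Rightarrow> cvec2 \<Rightarrow> bool" where
  "eig_decomp \<rho> l1 l2 p1 p2 \<longleftrightarrow>
     braket p1 p1 = 1 \<and> braket p2 p2 = 1 \<and> braket p1 p2 = 0 \<and>
     \<rho> *v p1 = complex_of_real l1 *s p1 \<and> \<rho> *v p2 = complex_of_real l2 *s p2 \<and>
     l1 \<ge> l2 \<and> l2 \<ge> 0"

definition pmean :: "ereal \<Rightarrow> real \<Rightarrow> real \<Rightarrow> real" where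
  "pmean s a b =
     (if a = 0 \<or> b = 0 then 0
      else if s = -\<infinity> then min a b
      else if s = 0 then sqrt (a * b)
      else ((a powr real_of_ereal s + b powr real_of_ereal s) / 2) powr (1 / real_of_ereal s))"

definition zeta :: "ereal \<Rightarrow> cmat2 \<Rightarrow> real \<Rightarrow> real \<Rightarrow> cvec2 \<Rightarrow> cvec2 \<Rightarrow> cmat2 \<Rightarrow> cmat2 \<Rightarrow> complex" where
  "zeta s \<rho> l1 l2 p1 p2 X Y =
     (let l = (\<lambda>i::nat. if i = 1 then l1 else l2);
          p = (\<lambda>i::nat. if i = 1 then p1 else p2)
      in mtrace (\<rho> ** cadj X ** Y)
         - (\<Sum>i\<in>{1,2}. \<Sum>j\<in>{1,2}. complex_of_real (pmean s (l i) (l j))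
              * braket (p i) (cadj X *v p j) * braket (p j) (Y *v p i)))"

definition Iinfo :: "ereal \<Rightarrow> cmat2 \<Rightarrow> real \<Rightarrow> real \<Rightarrow> cvec2 \<Rightarrow> cvec2 \<Rightarrow> cmat2 \<Rightarrow> complex" where
  "Iinfo s \<rho> l1 l2 p1 p2 X = zeta s \<rho> l1 l2 p1 p2 X X"

definition calI :: "ereal \<Rightarrow> cmat2 \<Rightarrow> real \<Rightarrow> real \<Rightarrow> cvec2 \<Rightarrow> cvec2 \<Rightarrow> cmat2 \<Rightarrow> cmat2 \<Rightarrow> complex" where
  "calI s \<rho> l1 l2 p1 p2 X Y =
     Iinfo s \<rho> l1 l2 p1 p2 X * Iinfo s \<rho> l1 l2 p1 p2 Y
     - (1/16) * (Iinfo s \<rho> l1 l2 p1 p2 (X + Y) - Iinfo s \<rho> l1 l2 p1 p2 (X - Y))\<^sup>2"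

end

theory Submission
  imports Defs
begin

text \<open>In the eigenbasis of \<open>\<rho>\<close> the diagonal terms of \<open>\<zeta>\<^sup>s\<close> cancel because
  \<open>m\<^sub>s(\<lambda>, \<lambda>) = \<lambda>\<close>. Hence a Hermitian \<open>H\<close> with off-diagonal entry
  \<open>h = \<langle>\<psi>\<^sub>1|H|\<psi>\<^sub>2\<rangle>\<close> has \<open>I\<^sup>s(\<rho>, H) = c |h|\<^sup>2\<close> with
  \<open>c = \<lambda>\<^sub>1 + \<lambda>\<^sub>2 - 2 m\<^sub>s(\<lambda>\<^sub>1, \<lambda>\<^sub>2)\<close>, and by polarization the quantity in question is
  \<open>c\<^sup>2 (Im (x cnj y))\<^sup>2\<close>, where \<open>x, y\<close> are the off-diagonal entries of \<open>X, Y\<close>. On the other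
  hand \<open>Tr[\<rho>[X,Y]] = 2i (\<lambda>\<^sub>1 - \<lambda>\<^sub>2) Im (x cnj y)\<close>, so the claim reduces to
  \<open>|c| \<le> \<lambda>\<^sub>1 - \<lambda>\<^sub>2\<close>, which holds because the power mean lies between the eigenvalues.\<close>

definition orthonormal_pair :: "cvec2 \<Rightarrow> cvec2 \<Rightarrow> bool" where
  "orthonormal_pair p1 p2 \<longleftrightarrow> braket p1 p1 = 1 \<and> braket p2 p2 = 1 \<and> braket p1 p2 = 0"

lemma eig_decomp_orthonormal_pair: "eig_decomp \<rho> l1 l2 p1 p2 \<Longrightarrow> orthonormal_pair p1 p2"
  by (simp add: eig_decomp_def orthonormal_pair_def)

lemma braket_add_right: "braket u (v + w) = braket u v + braket u w"
  by (simp add: braket_def sum_2 algebra_simps)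

lemma braket_diff_right: "braket u (v - w) = braket u v - braket u w"
  by (simp add: braket_def sum_2 algebra_simps)

lemma braket_scale_right: "braket u (c *s v) = c * braket u v"
  by (simp add: braket_def sum_2 algebra_simps)

lemma braket_scale_left: "braket (c *s u) v = cnj c * braket u v"
  by (simp add: braket_def sum_2 algebra_simps)

lemma braket_commute: "braket v u = cnj (braket u v)"
  by (simp add: braket_def sum_2)

lemma braket_cadj: "braket u (A *v v) = braket (cadj A *v u) v"
  by (simp add: braket_def cadj_def matrix_vector_mult_def sum_2 algebra_simps)

lemma hermitian_braket_commute:
  "hermitian H \<Longrightarrow> braket v (H *v u) = cnj (braket u (H *v v))"
  by (metis braket_cadj braket_commute hermitian_def)

lemma hermitian_add: "hermitian A \<Longrightarrow> hermitian B \<Longrightarrow> hermitian (A + B)"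
  by (simp add: hermitian_def cadj_def vec_eq_iff)

lemma hermitian_diff: "hermitian A \<Longrightarrow> hermitian B \<Longrightarrow> hermitian (A - B)"
  by (simp add: hermitian_def cadj_def vec_eq_iff)

definition column_matrix :: "cvec2 \<Rightarrow> cvec2 \<Rightarrow> cmat2" where
  "column_matrix p1 p2 = (\<chi> i j. if j = 1 then p1 $ i else p2 $ i)"

lemma column_matrix_unitary:
  assumes "orthonormal_pair p1 p2"
  shows "column_matrix p1 p2 ** cadj (column_matrix p1 p2) = mat 1"
proof -
  have "braket p2 p1 = 0"
    using assms braket_commute[of p2 p1] by (simp add: orthonormal_pair_def)
  then have "cadj (column_matrix p1 p2) ** column_matrix p1 p2 = mat 1"
    using assms unfolding vec_eq_iff
    by (auto simp: orthonormal_pair_def column_matrix_def cadj_def matrix_matrix_mult_def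
        mat_def sum_2 braket_def forall_2)
  then show ?thesis
    using matrix_left_right_inverse by blast
qed

lemma orthonormal_pair_expansion:
  assumes "orthonormal_pair p1 p2"
  shows "v = braket p1 v *s p1 + braket p2 v *s p2"
proof -
  let ?U = "column_matrix p1 p2"
  have "v = (?U ** cadj ?U) *v v"
    using column_matrix_unitary[OF assms] by simp
  also have "\<dots> = ?U *v (cadj ?U *v v)"
    by (simp add: matrix_vector_mul_assoc)
  also have "\<dots> = braket p1 v *s p1 + braket p2 v *s p2"
    by (simp add: vec_eq_iff column_matrix_def cadj_def matrix_vector_mult_def sum_2
        braket_def forall_2 algebra_simps)
  finally show ?thesis .
qed

lemma mtrace_orthonormal_pair:
  assumes "orthonormal_pair p1 p2"
  shows "mtrace A = braket p1 (A *v p1) + braket p2 (A *v p2)"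
proof -
  let ?U = "column_matrix p1 p2"
  have "mtrace A = mtrace (A ** (?U ** cadj ?U))"
    using column_matrix_unitary[OF assms] by simp
  also have "\<dots> = braket p1 (A *v p1) + braket p2 (A *v p2)"
    by (simp add: mtrace_def column_matrix_def cadj_def matrix_matrix_mult_def
        matrix_vector_mult_def sum_2 braket_def algebra_simps)
  finally show ?thesis .
qed

lemma braket_matrix_mult_orthonormal_pair:
  assumes "orthonormal_pair p1 p2"
  shows "braket u ((A ** B) *v v)
    = braket u (A *v p1) * braket p1 (B *v v) + braket u (A *v p2) * braket p2 (B *v v)"
proof -
  have "(A ** B) *v v = A *v (B *v v)"
    by (simp add: matrix_vector_mul_assoc)
  also have "B *v v = braket p1 (B *v v) *s p1 + braket p2 (B *v v) *s p2"
    by (rule orthonormal_pair_expansion[OF assms])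
  finally show ?thesis
    by (simp add: matrix_vector_right_distrib vector_scalar_commute braket_add_right
        braket_scale_right mult.commute)
qed

lemma braket_eigenvector_mult:
  assumes "hermitian \<rho>" and "\<rho> *v p = complex_of_real l *s p"
  shows "braket p ((\<rho> ** B) *v v) = of_real l * braket p (B *v v)"
  using assms
  by (simp add: matrix_vector_mul_assoc[symmetric] braket_cadj[of p \<rho>] hermitian_def
      braket_scale_left)

lemma pmean_commute: "pmean s a b = pmean s b a"
  by (simp add: pmean_def add.commute min.commute mult.commute)

lemma pmean_self:
  assumes "0 \<le> a" and "s \<le> 0"
  shows "pmean s a a = a"
proof (cases "a = 0 \<or> s = -\<infinity> \<or> s = 0")
  case True
  then show ?thesis
    using assms by (auto simp: pmean_def)
next
  case False
  then obtain r where "s = ereal r" and "r < 0"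
    using assms by (cases s) auto
  with False assms show ?thesis
    by (simp add: pmean_def powr_powr)
qed

lemma pmean_between:
  assumes "0 \<le> b" and "b \<le> a" and "s \<le> 0"
  shows "b \<le> pmean s a b \<and> pmean s a b \<le> a"
proof (cases "b = 0 \<or> s = -\<infinity> \<or> s = 0")
  case True
  then show ?thesis
    using assms by (auto simp: pmean_def real_sqrt_le_iff power2_eq_square
        intro!: real_le_rsqrt real_le_lsqrt mult_left_mono mult_right_mono)
next
  case False
  then obtain r where s: "s = ereal r" and r: "r < 0"
    using assms by (cases s) auto
  have pos: "0 < a" "0 < b"
    using False assms by auto
  define M where "M = (a powr r + b powr r) / 2"
  have "a powr r \<le> b powr r"
    using r pos assms by (intro powr_mono2') auto
  then have M: "a powr r \<le> M" "M \<le> b powr r" "0 < M"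
    using pos by (auto simp: M_def add_pos_pos)
  \<comment> \<open>\<open>t \<mapsto> t powr (1/r)\<close> is antitone since \<open>1/r < 0\<close>\<close>
  have "M powr (1 / r) \<le> (a powr r) powr (1 / r)"
    using M r pos by (intro powr_mono2') auto
  moreover have "(b powr r) powr (1 / r) \<le> M powr (1 / r)"
    using M r pos by (intro powr_mono2') auto
  ultimately show ?thesis
    using False s r pos by (simp add: pmean_def M_def powr_powr)
qed

lemma mtrace_eigenbasis_mult:
  assumes "hermitian \<rho>" and "eig_decomp \<rho> l1 l2 p1 p2"
  shows "mtrace (\<rho> ** A) = of_real l1 * braket p1 (A *v p1) + of_real l2 * braket p2 (A *v p2)"
proof -
  have eig: "\<rho> *v p1 = of_real l1 *s p1" "\<rho> *v p2 = of_real l2 *s p2"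
    using assms(2) by (auto simp: eig_decomp_def)
  show ?thesis
    using assms(2)
    by (simp add: mtrace_orthonormal_pair[OF eig_decomp_orthonormal_pair]
        braket_eigenvector_mult[OF assms(1) eig(1)] braket_eigenvector_mult[OF assms(1) eig(2)])
qed

lemma zeta_eigenbasis:
  assumes "hermitian \<rho>" and "eig_decomp \<rho> l1 l2 p1 p2"
  shows "zeta s \<rho> l1 l2 p1 p2 X Y =
      of_real (l1 - pmean s l1 l1) * braket p1 (cadj X *v p1) * braket p1 (Y *v p1)
    + of_real (l1 - pmean s l1 l2) * braket p1 (cadj X *v p2) * braket p2 (Y *v p1)
    + of_real (l2 - pmean s l2 l1) * braket p2 (cadj X *v p1) * braket p1 (Y *v p2)
    + of_real (l2 - pmean s l2 l2) * braket p2 (cadj X *v p2) * braket p2 (Y *v p2)"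
proof -
  have "mtrace (\<rho> ** cadj X ** Y)
      = of_real l1 * braket p1 ((cadj X ** Y) *v p1) + of_real l2 * braket p2 ((cadj X ** Y) *v p2)"
    by (simp only: matrix_mul_assoc[symmetric] mtrace_eigenbasis_mult[OF assms])
  then show ?thesis
    unfolding zeta_def Let_def
    using assms(2)
    by (simp add: braket_matrix_mult_orthonormal_pair[OF eig_decomp_orthonormal_pair] algebra_simps)
qed

lemma Iinfo_hermitian_eigenbasis:
  assumes "hermitian \<rho>" and "eig_decomp \<rho> l1 l2 p1 p2" and "hermitian H" and "s \<le> 0"
  shows "Iinfo s \<rho> l1 l2 p1 p2 H
    = of_real ((l1 + l2 - 2 * pmean s l1 l2) * (cmod (braket p1 (H *v p2)))\<^sup>2)"
proof -
  define h where "h = braket p1 (H *v p2)"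
  have "0 \<le> l2" "l2 \<le> l1"
    using assms(2) by (auto simp: eig_decomp_def)
  then have "Iinfo s \<rho> l1 l2 p1 p2 H = of_real (l1 + l2 - 2 * pmean s l1 l2) * (h * cnj h)"
    using assms(3)
    by (simp add: Iinfo_def zeta_eigenbasis[OF assms(1,2)] hermitian_def pmean_self[OF _ assms(4)]
        pmean_commute[of s l2 l1] hermitian_braket_commute[OF assms(3), of p2 p1] h_def
        algebra_simps)
  then show ?thesis
    by (simp only: complex_norm_square[symmetric] of_real_mult h_def)
qed

lemma mtrace_commutator_eigenbasis:
  assumes "hermitian \<rho>" and "eig_decomp \<rho> l1 l2 p1 p2" and "hermitian X" and "hermitian Y"
  defines "x \<equiv> braket p1 (X *v p2)" and "y \<equiv> braket p1 (Y *v p2)"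
  shows "mtrace (\<rho> ** commutator X Y) = of_real (l1 - l2) * (x * cnj y - y * cnj x)"
proof -
  have onb: "orthonormal_pair p1 p2"
    using assms(2) by (rule eig_decomp_orthonormal_pair)
  show ?thesis
    by (simp add: mtrace_eigenbasis_mult[OF assms(1,2)] commutator_def
        matrix_vector_mult_diff_rdistrib braket_diff_right braket_matrix_mult_orthonormal_pair[OF onb]
        hermitian_braket_commute[OF assms(3), of p2 p1] hermitian_braket_commute[OF assms(4), of p2 p1]
        x_def y_def algebra_simps)
qed

lemma polarization_cmod:
  fixes z w :: complex
  shows "(cmod z)\<^sup>2 * (cmod w)\<^sup>2 - ((cmod (z + w))\<^sup>2 - (cmod (z - w))\<^sup>2)\<^sup>2 / 16
    = (Im (z * cnj w))\<^sup>2"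
  unfolding cmod_power2 by (simp add: power2_eq_square algebra_simps)

lemma cmod_diff_cnj: "cmod (z * cnj w - w * cnj z) = 2 * \<bar>Im (z * cnj w)\<bar>"
proof -
  have "z * cnj w - w * cnj z = complex_of_real (2 * Im (z * cnj w)) * \<i>"
    by (simp add: complex_eq_iff)
  then show ?thesis
    by (simp only: norm_mult norm_ii norm_of_real)
qed

lemma calI_hermitian_eigenbasis:
  assumes "hermitian \<rho>" and "eig_decomp \<rho> l1 l2 p1 p2" and "hermitian X" and "hermitian Y"
    and "s \<le> 0"
  defines "x \<equiv> braket p1 (X *v p2)" and "y \<equiv> braket p1 (Y *v p2)"
  shows "calI s \<rho> l1 l2 p1 p2 X Y = of_real ((l1 + l2 - 2 * pmean s l1 l2)\<^sup>2 * (Im (x * cnj y))\<^sup>2)"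
proof -
  define c where "c = l1 + l2 - 2 * pmean s l1 l2"
  have I: "Iinfo s \<rho> l1 l2 p1 p2 H = of_real (c * (cmod (braket p1 (H *v p2)))\<^sup>2)"
    if "hermitian H" for H
    using Iinfo_hermitian_eigenbasis[OF assms(1,2) that assms(5)] by (simp add: c_def)
  have "braket p1 ((X + Y) *v p2) = x + y" "braket p1 ((X - Y) *v p2) = x - y"
    by (simp_all add: x_def y_def matrix_vector_mult_add_rdistrib matrix_vector_mult_diff_rdistrib
        braket_add_right braket_diff_right)
  then have "calI s \<rho> l1 l2 p1 p2 X Y
      = of_real (c * (cmod x)\<^sup>2 * (c * (cmod y)\<^sup>2)
          - (c * (cmod (x + y))\<^sup>2 - c * (cmod (x - y))\<^sup>2)\<^sup>2 / 16)"
    using assms(3,4)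
    by (simp add: calI_def I hermitian_add hermitian_diff x_def y_def)
  also have "\<dots> = of_real (c\<^sup>2 * ((cmod x)\<^sup>2 * (cmod y)\<^sup>2
      - ((cmod (x + y))\<^sup>2 - (cmod (x - y))\<^sup>2)\<^sup>2 / 16))"
    by (simp add: power2_eq_square algebra_simps)
  finally show ?thesis
    by (simp add: polarization_cmod c_def)
qed

theorem corollary1:
  fixes s :: ereal and \<rho> X Y :: "complex^2^2" and l1 l2 :: real and p1 p2 :: "complex^2"
  assumes "-\<infinity> \<le> s" and "s \<le> 0"
    and "density_matrix \<rho>"
    and "hermitian X" and "hermitian Y"
    and "eig_decomp \<rho> l1 l2 p1 p2"
  shows "Im (calI s \<rho> l1 l2 p1 p2 X Y) = 0
       \<and> 0 \<le> Re (calI s \<rho> l1 l2 p1 p2 X Y)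
       \<and> Re (calI s \<rho> l1 l2 p1 p2 X Y) \<le> (1/4) * (cmod (mtrace (\<rho> ** commutator X Y)))\<^sup>2"
proof -
  have herm: "hermitian \<rho>"
    using assms(3) by (simp add: density_matrix_def psd_def)
  define c where "c = l1 + l2 - 2 * pmean s l1 l2"
  define q where "q = Im (braket p1 (X *v p2) * cnj (braket p1 (Y *v p2)))"
  have calI: "calI s \<rho> l1 l2 p1 p2 X Y = of_real (c\<^sup>2 * q\<^sup>2)"
    unfolding c_def q_def by (rule calI_hermitian_eigenbasis[OF herm assms(6,4,5,2)])
  have trace: "(cmod (mtrace (\<rho> ** commutator X Y)))\<^sup>2 = 4 * (l1 - l2)\<^sup>2 * q\<^sup>2"
    unfolding mtrace_commutator_eigenbasis[OF herm assms(6,4,5)] norm_mult norm_of_real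
      cmod_diff_cnj q_def
    by (simp add: power_mult_distrib)
  have "l2 \<le> pmean s l1 l2" "pmean s l1 l2 \<le> l1"
    using pmean_between[of l2 l1 s] assms(2,6) by (auto simp: eig_decomp_def)
  then have "c\<^sup>2 \<le> (l1 - l2)\<^sup>2"
    by (intro power2_le_iff_abs_le[THEN iffD2]) (auto simp: c_def)
  then show ?thesis
    by (simp add: calI trace mult_right_mono)
qed

end
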